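(* Let $\mathbf{k}$ be a field whose characteristic is either $0$ or greater than $d$, let $A = \mathbf{k}^{d}$ with standard basis of orthogonal idempotents $e_1,\dots,e_d$, let $M$ be a finite-dimensional $\mathbf{k}$-vector space and let $\phi : A \to \mathrm{End}_{\mathbf{k}}(M)$ be a $\mathbf{k}$-linear map. Put $\alpha_i = \phi(e_i)$ and $T_\phi = x_1 \otimes \alpha_1 + \dots + x_d \otimes \alpha_d \in \mathbf{k}\langle x_1,\dots,x_d\rangle \otimes_{\mathbf{k}} \mathrm{End}_{\mathbf{k}}(M)$. Then $\phi$ is a (unital) $\mathbf{k}$-algebra homomorphism if and only if \[ \chi_d(T_\phi) := \sum_{\sigma \in S_d} (T_\phi - x_{\sigma(1)})(T_\phi - x_{\sigma(2)})\cdots (T_\phi - x_{\sigma(d)}) = 0 \] in $\mathbf{k}\langle x_1,\dots,x_d\rangle \otimes_{\mathbf{k}} \mathrm{End}_{\mathbf{k}}(M)$.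
   Context: Here $\mathbf{k}\langle x_1,\dots,x_d\rangle$ is the free associative algebra (tensor algebra $\mathrm{T}(A^\vee)$) on the dual basis $x_1,\dots,x_d$ of $A^\vee$ to $e_1,\dots,e_d$; in the tensor product $\mathbf{k}\langle x_1,\dots,x_d\rangle \otimes_{\mathbf{k}} \mathrm{End}_{\mathbf{k}}(M)$ the $x_i$ commute with elements of $\mathrm{End}_{\mathbf{k}}(M)$, and $x_{\sigma(j)}$ stands for $x_{\sigma(j)} \otimes \mathrm{id}_M$. The element $\chi_d = \sum_{\sigma\in S_d}(t - x_{\sigma(1)})\cdots(t - x_{\sigma(d)}) \in \mathbf{k}\langle x_1,\dots,x_d,t\rangle$ is the (unnormalized) symmetrized lift to the free algebra of the characteristic polynomial $\prod_{i=1}^d (t - x_i)$ of left multiplication on $A$, and $\chi_d(T_\phi)$ denotes substituting $t = T_\phi$. *)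

theory Defs
  imports "Jordan_Normal_Form.Matrix" "HOL-Combinatorics.Permutations"
begin

text \<open>Elements of the tensor product k<x_0,...,x_{d-1}> (x) End_k(k^n) are represented
  as functions from words (lists of letter indices) to n x n matrices (the matrix
  coefficient of each word); only finitely many words of interest occur.
  Letters are indexed 0..d-1 instead of 1..d.\<close>

type_synonym 'k ftensor = "nat list \<Rightarrow> 'k mat"

definition ft_zero :: "nat \<Rightarrow> 'k::field ftensor" where
  "ft_zero n = (\<lambda>w. 0\<^sub>m n n)"

definition ft_one :: "nat \<Rightarrow> 'k::field ftensor" where
  "ft_one n = (\<lambda>w. if w = [] then 1\<^sub>m n else 0\<^sub>m n n)"

definition ft_gen :: "nat \<Rightarrow> nat \<Rightarrow> 'k::field ftensor" where
  "ft_gen n i = (\<lambda>w. if w = [i] then 1\<^sub>m n else 0\<^sub>m n n)"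

definition ft_sub :: "nat \<Rightarrow> 'k::field ftensor \<Rightarrow> 'k ftensor \<Rightarrow> 'k ftensor" where
  "ft_sub n f g = (\<lambda>w. mat n n (\<lambda>(i,j). f w $$ (i,j) - g w $$ (i,j)))"

text \<open>Multiplication: the x's commute with matrices, words concatenate.\<close>
definition ft_mult :: "nat \<Rightarrow> 'k::field ftensor \<Rightarrow> 'k ftensor \<Rightarrow> 'k ftensor" where
  "ft_mult n f g = (\<lambda>w. mat n n (\<lambda>(i,j).
      \<Sum>a\<in>{0..length w}. \<Sum>l<n. f (take a w) $$ (i,l) * g (drop a w) $$ (l,j)))"

definition ft_prod :: "nat \<Rightarrow> 'k::field ftensor list \<Rightarrow> 'k ftensor" where
  "ft_prod n fs = foldr (ft_mult n) fs (ft_one n)"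

definition ft_sum :: "nat \<Rightarrow> ('s \<Rightarrow> 'k::field ftensor) \<Rightarrow> 's set \<Rightarrow> 'k ftensor" where
  "ft_sum n F S = (\<lambda>w. mat n n (\<lambda>(i,j). \<Sum>s\<in>S. F s w $$ (i,j)))"

definition T_phi :: "nat \<Rightarrow> nat \<Rightarrow> ('k::field vec \<Rightarrow> 'k mat) \<Rightarrow> 'k ftensor" where
  "T_phi n d \<phi> = (\<lambda>w. case w of [i] \<Rightarrow> (if i < d then \<phi> (unit_vec d i) else 0\<^sub>m n n)
                              | _ \<Rightarrow> 0\<^sub>m n n)"

definition chi_d :: "nat \<Rightarrow> nat \<Rightarrow> 'k::field ftensor \<Rightarrow> 'k ftensor" where
  "chi_d n d T = ft_sum n
     (\<lambda>\<sigma>. ft_prod n (map (\<lambda>k. ft_sub n T (ft_gen n (\<sigma> k))) [0..<d]))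
     {\<sigma>. \<sigma> permutes {..<d}}"

definition alg_hom_kd :: "nat \<Rightarrow> nat \<Rightarrow> ('k::field vec \<Rightarrow> 'k mat) \<Rightarrow> bool" where
  "alg_hom_kd n d \<phi> \<longleftrightarrow>
     \<phi> (vec d (\<lambda>_. 1)) = 1\<^sub>m n \<and>
     (\<forall>a\<in>carrier_vec d. \<forall>b\<in>carrier_vec d.
        \<phi> (vec d (\<lambda>i. a $ i * b $ i)) = \<phi> a * \<phi> b)"

end

theory Submission
  imports Defs "HOL-Computational_Algebra.Polynomial" "HOL-Number_Theory.Cong"
begin

text \<open>Write \<open>\<alpha>\<^sub>c = \<phi>(e\<^sub>c)\<close>; \<open>\<phi>\<close> is a unital algebra map iff the \<open>\<alpha>\<^sub>c\<close> form a complete system of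
  orthogonal idempotents. Each factor \<open>T - x\<^sub>s\<close> is linear in the letters, so the coefficient of a
  word \<open>w\<close> of length \<open>d\<close> in \<open>\<chi>\<^sub>d(T)\<close> is \<open>\<Sum>\<^sub>\<sigma> \<Prod>\<^sub>k (\<alpha>\<^bsub>w\<^sub>k\<^esub> - \<delta>\<^bsub>w\<^sub>k,\<sigma>(k)\<^esub>)\<close>.

  If the \<open>\<alpha>\<^sub>c\<close> are orthogonal idempotents, every \<open>\<alpha>\<^sub>j\<close> is a common eigenvector of right
  multiplication by these factors, and the factor at position \<open>\<sigma>\<^sup>-\<^sup>1(j)\<close> has eigenvalue \<open>0\<close>; as
  \<open>\<Sum>\<^sub>j \<alpha>\<^sub>j = 1\<close>, every coefficient vanishes.

  Conversely, substitute the scalars \<open>x\<^sub>c := c\<close>, which are distinct by the hypothesis on the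
  characteristic. This turns \<open>T\<close> into \<open>A = \<Sum>\<^sub>c c \<alpha>\<^sub>c\<close>, and the words of length \<open>d\<close> give
  \<open>d! \<Prod>\<^sub>c (A - c) = 0\<close>. Hence the Lagrange interpolation basis evaluated at \<open>A\<close> is a complete
  system of orthogonal idempotents \<open>E\<^sub>m\<close>, and the words beginning with the letter \<open>i\<close> give
  \<open>(d - 1)! \<Sum>\<^sub>m (\<alpha>\<^sub>i - \<delta>\<^sub>i\<^sub>m) \<gamma>\<^sub>m E\<^sub>m = 0\<close> with \<open>\<gamma>\<^sub>m \<noteq> 0\<close>. Multiplying by \<open>E\<^sub>j\<close> yields
  \<open>\<alpha>\<^sub>i E\<^sub>j = \<delta>\<^sub>i\<^sub>j E\<^sub>j\<close>, and summing over \<open>j\<close> gives \<open>\<alpha>\<^sub>i = E\<^sub>i\<close>.\<close>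

section \<open>Sums and products of square matrices\<close>

definition mat_sum :: "nat \<Rightarrow> 'a set \<Rightarrow> ('a \<Rightarrow> 'k::comm_monoid_add mat) \<Rightarrow> 'k mat" where
  "mat_sum n S f = mat n n (\<lambda>(i, j). \<Sum>s\<in>S. f s $$ (i, j))"

lemma mat_sum_carrier [simp]: "mat_sum n S f \<in> carrier_mat n n"
  and dim_mat_sum [simp]: "dim_row (mat_sum n S f) = n" "dim_col (mat_sum n S f) = n"
  by (simp_all add: mat_sum_def)

lemma index_mat_sum [simp]: "i < n \<Longrightarrow> j < n \<Longrightarrow> mat_sum n S f $$ (i, j) = (\<Sum>s\<in>S. f s $$ (i, j))"
  by (simp add: mat_sum_def)

lemma mat_sum_cong: "(\<And>s. s \<in> S \<Longrightarrow> f s = g s) \<Longrightarrow> mat_sum n S f = mat_sum n S g"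
  by (auto simp: mat_sum_def intro!: eq_matI sum.cong)

lemma mat_sum_zero: "(\<And>s. s \<in> S \<Longrightarrow> f s = 0\<^sub>m n n) \<Longrightarrow> mat_sum n S f = 0\<^sub>m n n"
  by (rule eq_matI) auto

lemma mat_sum_empty [simp]: "mat_sum n {} f = 0\<^sub>m n n"
  by (rule eq_matI) auto

lemma mat_sum_insert:
  assumes "finite S" "a \<notin> S" "f a \<in> carrier_mat n n"
  shows "mat_sum n (insert a S) f = f a + mat_sum n S f"
  using assms by (intro eq_matI) auto

lemma mat_sum_delta:
  assumes "finite S" "a \<in> S" "X \<in> carrier_mat n n"
  shows "mat_sum n S (\<lambda>s. if s = a then X else 0\<^sub>m n n) = X"
proof (rule eq_matI)
  fix i j assume "i < dim_row X" "j < dim_col X"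
  with assms show "mat_sum n S (\<lambda>s. if s = a then X else 0\<^sub>m n n) $$ (i, j) = X $$ (i, j)"
    by (simp add: if_distrib[of "\<lambda>M. M $$ (i, j)"] sum.delta cong: if_cong)
qed (use assms in auto)

lemma mat_sum_const:
  fixes X :: "'k::semiring_1 mat"
  shows "X \<in> carrier_mat n n \<Longrightarrow> mat_sum n S (\<lambda>s. X) = of_nat (card S) \<cdot>\<^sub>m X"
  by (intro eq_matI) auto

lemma smult_mat_eq_zero_imp:
  fixes M :: "'k::{semiring_0, semiring_no_zero_divisors} mat"
  assumes "c \<cdot>\<^sub>m M = 0\<^sub>m n n" "c \<noteq> 0" "M \<in> carrier_mat n n"
  shows "M = 0\<^sub>m n n"
proof (rule eq_matI)
  fix i j assume "i < dim_row (0\<^sub>m n n :: 'k mat)" "j < dim_col (0\<^sub>m n n :: 'k mat)"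
  with assms show "M $$ (i, j) = 0\<^sub>m n n $$ (i, j)"
    by (metis (no_types, lifting) carrier_matD index_smult_mat index_zero_mat mult_eq_0_iff)
qed (use assms in auto)

lemma mat_eq_if_minus_eq_zero:
  fixes A B :: "'k::ab_group_add mat"
  assumes "A - B = 0\<^sub>m n n" "A \<in> carrier_mat n n" "B \<in> carrier_mat n n"
  shows "A = B"
proof (rule eq_matI)
  fix i j assume "i < dim_row B" "j < dim_col B"
  moreover from this have "(A - B) $$ (i, j) = 0"
    using assms by simp
  ultimately show "A $$ (i, j) = B $$ (i, j)"
    using assms(2,3) by simp
qed (use assms in auto)

lemma mat_sum_swap:
  "mat_sum n S (\<lambda>s. mat_sum n T (f s)) = mat_sum n T (\<lambda>u. mat_sum n S (\<lambda>s. f s u))"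
  by (rule eq_matI) (auto intro: sum.swap)

lemma smult_mat_sum:
  fixes f :: "'a \<Rightarrow> 'k::semiring_0 mat"
  assumes "\<And>s. s \<in> S \<Longrightarrow> f s \<in> carrier_mat n n"
  shows "c \<cdot>\<^sub>m mat_sum n S f = mat_sum n S (\<lambda>s. c \<cdot>\<^sub>m f s)"
proof (rule eq_matI)
  fix i j assume "i < dim_row (mat_sum n S (\<lambda>s. c \<cdot>\<^sub>m f s))" "j < dim_col (mat_sum n S (\<lambda>s. c \<cdot>\<^sub>m f s))"
  then have "i < n" "j < n" by auto
  moreover have "(c \<cdot>\<^sub>m f s) $$ (i, j) = c * f s $$ (i, j)" if "s \<in> S" for s
    using assms[OF that] \<open>i < n\<close> \<open>j < n\<close> by auto
  ultimately show "(c \<cdot>\<^sub>m mat_sum n S f) $$ (i, j) = mat_sum n S (\<lambda>s. c \<cdot>\<^sub>m f s) $$ (i, j)"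
    by (simp add: sum_distrib_left)
qed auto

lemma index_mult_mat_sum:
  assumes "A \<in> carrier_mat n n" "B \<in> carrier_mat n n" "i < n" "j < n"
  shows "(A * B) $$ (i, j) = (\<Sum>l<n. A $$ (i, l) * B $$ (l, j))"
  using assms by (auto simp: scalar_prod_def lessThan_atLeast0 intro!: sum.cong)

lemma mat_sum_mult_right:
  fixes f :: "'a \<Rightarrow> 'k::semiring_0 mat"
  assumes "\<And>s. s \<in> S \<Longrightarrow> f s \<in> carrier_mat n n" "Y \<in> carrier_mat n n"
  shows "mat_sum n S f * Y = mat_sum n S (\<lambda>s. f s * Y)"
proof (rule eq_matI)
  fix i j assume "i < dim_row (mat_sum n S (\<lambda>s. f s * Y))" "j < dim_col (mat_sum n S (\<lambda>s. f s * Y))"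
  then have i: "i < n" and j: "j < n" by auto
  have "(mat_sum n S f * Y) $$ (i, j) = (\<Sum>l<n. (\<Sum>s\<in>S. f s $$ (i, l)) * Y $$ (l, j))"
    using index_mult_mat_sum[OF mat_sum_carrier[of n S f] assms(2) i j] i by (auto intro!: sum.cong)
  also have "\<dots> = (\<Sum>s\<in>S. \<Sum>l<n. f s $$ (i, l) * Y $$ (l, j))"
    by (simp add: sum_distrib_right sum.swap[of _ S])
  also have "\<dots> = mat_sum n S (\<lambda>s. f s * Y) $$ (i, j)"
    using assms i j by (auto simp: index_mult_mat_sum[of _ n] intro!: sum.cong)
  finally show "(mat_sum n S f * Y) $$ (i, j) = mat_sum n S (\<lambda>s. f s * Y) $$ (i, j)" .
qed (use assms in auto)

lemma mat_sum_mult_left: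
  fixes f :: "'a \<Rightarrow> 'k::semiring_0 mat"
  assumes "\<And>s. s \<in> S \<Longrightarrow> f s \<in> carrier_mat n n" "Y \<in> carrier_mat n n"
  shows "Y * mat_sum n S f = mat_sum n S (\<lambda>s. Y * f s)"
proof (rule eq_matI)
  fix i j assume "i < dim_row (mat_sum n S (\<lambda>s. Y * f s))" "j < dim_col (mat_sum n S (\<lambda>s. Y * f s))"
  then have i: "i < n" and j: "j < n" by auto
  have "(Y * mat_sum n S f) $$ (i, j) = (\<Sum>l<n. Y $$ (i, l) * (\<Sum>s\<in>S. f s $$ (l, j)))"
    using index_mult_mat_sum[OF assms(2) mat_sum_carrier[of n S f] i j] j by (auto intro!: sum.cong)
  also have "\<dots> = (\<Sum>s\<in>S. \<Sum>l<n. Y $$ (i, l) * f s $$ (l, j))"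
    by (simp add: sum_distrib_left sum.swap[of _ S])
  also have "\<dots> = mat_sum n S (\<lambda>s. Y * f s) $$ (i, j)"
    using assms i j by (auto simp: index_mult_mat_sum[of _ n] intro!: sum.cong)
  finally show "(Y * mat_sum n S f) $$ (i, j) = mat_sum n S (\<lambda>s. Y * f s) $$ (i, j)" .
qed (use assms in auto)

definition mat_prod_list :: "nat \<Rightarrow> 'k::semiring_1 mat list \<Rightarrow> 'k mat" where
  "mat_prod_list n Ms = foldr (*) Ms (1\<^sub>m n)"

lemma mat_prod_list_Nil [simp]: "mat_prod_list n [] = 1\<^sub>m n"
  and mat_prod_list_Cons [simp]: "mat_prod_list n (M # Ms) = M * mat_prod_list n Ms"
  by (simp_all add: mat_prod_list_def)

lemma mat_prod_list_carrier:
  "(\<And>M. M \<in> set Ms \<Longrightarrow> M \<in> carrier_mat n n) \<Longrightarrow> mat_prod_list n Ms \<in> carrier_mat n n"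
  by (induction Ms) (auto intro!: mult_carrier_mat)

lemma mat_prod_list_mult_eigen:
  fixes E :: "'k::comm_semiring_1 mat"
  assumes "length cs = length Ms" "\<And>M. M \<in> set Ms \<Longrightarrow> M \<in> carrier_mat n n" "E \<in> carrier_mat n n"
    and "\<And>k. k < length Ms \<Longrightarrow> Ms ! k * E = cs ! k \<cdot>\<^sub>m E"
  shows "mat_prod_list n Ms * E = prod_list cs \<cdot>\<^sub>m E"
  using assms
proof (induction cs Ms rule: list_induct2)
  case Nil
  then show ?case by (intro eq_matI) auto
next
  case (Cons c cs M Ms)
  have M: "M \<in> carrier_mat n n" and Ms: "mat_prod_list n Ms \<in> carrier_mat n n"
    using Cons.prems by (auto intro: mat_prod_list_carrier)
  have "mat_prod_list n (M # Ms) * E = M * (mat_prod_list n Ms * E)"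
    using M Ms Cons.prems(2) by simp
  also have "\<dots> = prod_list cs \<cdot>\<^sub>m (M * E)"
    using Cons M by (force simp: mult_smult_distrib)
  also have "\<dots> = prod_list (c # cs) \<cdot>\<^sub>m E"
    using Cons.prems(2) Cons.prems(3)[of 0] by (intro eq_matI) (auto simp: ac_simps)
  finally show ?case .
qed

section \<open>Evaluating polynomials at a square matrix\<close>

definition poly_mat :: "nat \<Rightarrow> 'k::comm_ring_1 mat \<Rightarrow> 'k poly \<Rightarrow> 'k mat" where
  "poly_mat n A p = fold_coeffs (\<lambda>a M. a \<cdot>\<^sub>m 1\<^sub>m n + A * M) p (0\<^sub>m n n)"

context
  fixes n :: nat and A :: "'k::comm_ring_1 mat"
  assumes A: "A \<in> carrier_mat n n"
begin

lemma poly_mat_0 [simp]: "poly_mat n A 0 = 0\<^sub>m n n"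
  by (simp add: poly_mat_def)

lemma poly_mat_pCons: "poly_mat n A (pCons a p) = a \<cdot>\<^sub>m 1\<^sub>m n + A * poly_mat n A p"
proof (cases "p = 0 \<and> a = 0")
  case True
  have "0 \<cdot>\<^sub>m 1\<^sub>m n + A * 0\<^sub>m n n = (0\<^sub>m n n :: 'k mat)"
    using A by (intro eq_matI) auto
  with True show ?thesis by (simp add: poly_mat_def)
qed (auto simp: poly_mat_def)

lemma poly_mat_carrier [simp]: "poly_mat n A p \<in> carrier_mat n n"
  by (induction p) (use A in \<open>auto simp: poly_mat_pCons\<close>)

lemma dim_poly_mat [simp]: "dim_row (poly_mat n A p) = n" "dim_col (poly_mat n A p) = n"
  using poly_mat_carrier[of p] unfolding carrier_mat_def by auto

lemma poly_mat_add: "poly_mat n A (p + q) = poly_mat n A p + poly_mat n A q"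
proof (induction p q rule: poly_induct2)
  case 0
  then show ?case by (intro eq_matI) auto
next
  case (pCons a p b q)
  have "poly_mat n A (pCons a p + pCons b q) = (a + b) \<cdot>\<^sub>m 1\<^sub>m n + (A * poly_mat n A p + A * poly_mat n A q)"
    by (simp add: poly_mat_pCons pCons mult_add_distrib_mat[OF A poly_mat_carrier poly_mat_carrier])
  also have "\<dots> = poly_mat n A (pCons a p) + poly_mat n A (pCons b q)"
    using A by (intro eq_matI) (auto simp: poly_mat_pCons algebra_simps)
  finally show ?case .
qed

lemma poly_mat_smult: "poly_mat n A (smult c p) = c \<cdot>\<^sub>m poly_mat n A p"
proof (induction p)
  case 0
  then show ?case by (intro eq_matI) auto
next
  case (pCons a p)
  then have "poly_mat n A (smult c (pCons a p)) = (c * a) \<cdot>\<^sub>m 1\<^sub>m n + c \<cdot>\<^sub>m (A * poly_mat n A p)"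
    by (simp add: poly_mat_pCons mult_smult_distrib[OF A poly_mat_carrier])
  also have "\<dots> = c \<cdot>\<^sub>m poly_mat n A (pCons a p)"
    using A by (intro eq_matI) (auto simp: poly_mat_pCons algebra_simps)
  finally show ?case .
qed

lemma poly_mat_mult: "poly_mat n A (p * q) = poly_mat n A p * poly_mat n A q"
proof (induction p)
  case 0
  then show ?case by (simp add: left_mult_zero_mat[OF poly_mat_carrier])
next
  case (pCons a p)
  have "poly_mat n A (pCons a p * q) = a \<cdot>\<^sub>m poly_mat n A q + (0 \<cdot>\<^sub>m 1\<^sub>m n + A * (poly_mat n A p * poly_mat n A q))"
    by (simp add: poly_mat_add poly_mat_smult poly_mat_pCons pCons)
  also have "\<dots> = a \<cdot>\<^sub>m (1\<^sub>m n * poly_mat n A q) + (A * poly_mat n A p) * poly_mat n A q"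
    unfolding assoc_mult_mat[OF A poly_mat_carrier poly_mat_carrier] using A by (intro eq_matI) auto
  also have "\<dots> = (a \<cdot>\<^sub>m 1\<^sub>m n) * poly_mat n A q + (A * poly_mat n A p) * poly_mat n A q"
    by (simp add: mult_smult_assoc_mat[OF one_carrier_mat poly_mat_carrier])
  also have "\<dots> = (a \<cdot>\<^sub>m 1\<^sub>m n + A * poly_mat n A p) * poly_mat n A q"
    by (rule add_mult_distrib_mat[symmetric]) (use A in auto)
  also have "\<dots> = poly_mat n A (pCons a p) * poly_mat n A q"
    by (simp add: poly_mat_pCons)
  finally show ?case .
qed

lemma poly_mat_1 [simp]: "poly_mat n A 1 = 1\<^sub>m n"
  using A by (intro eq_matI) (auto simp: one_pCons poly_mat_pCons)

lemma poly_mat_linear: "poly_mat n A [:- a, 1:] = A - a \<cdot>\<^sub>m 1\<^sub>m n"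
  using A by (intro eq_matI) (auto simp: poly_mat_pCons)

lemma poly_mat_prod_list: "poly_mat n A (prod_list ps) = mat_prod_list n (map (poly_mat n A) ps)"
  by (induction ps) (auto simp: poly_mat_mult)

lemma poly_mat_sum: "finite S \<Longrightarrow> poly_mat n A (\<Sum>s\<in>S. p s) = mat_sum n S (\<lambda>s. poly_mat n A (p s))"
  by (induction S rule: finite_induct) (auto simp: poly_mat_add mat_sum_insert)

lemma poly_mat_eq_if_dvd_diff:
  assumes "r dvd p - q" "poly_mat n A r = 0\<^sub>m n n"
  shows "poly_mat n A p = poly_mat n A q"
proof -
  obtain s where "p - q = r * s"
    using assms(1) by (rule dvdE)
  then have "poly_mat n A p = poly_mat n A (r * s + q)"
    by (simp add: algebra_simps)
  also have "\<dots> = poly_mat n A q"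
    using assms(2) by (simp add: poly_mat_add poly_mat_mult left_mult_zero_mat[OF poly_mat_carrier])
  finally show ?thesis .
qed

end

section \<open>Lagrange interpolation at the nodes \<open>t 0, \<dots>, t (d - 1)\<close>\<close>

definition node_poly :: "(nat \<Rightarrow> 'k::comm_ring_1) \<Rightarrow> nat \<Rightarrow> 'k poly" where
  "node_poly t d = (\<Prod>k<d. [:- t k, 1:])"

definition lagrange_numer :: "(nat \<Rightarrow> 'k::comm_ring_1) \<Rightarrow> nat \<Rightarrow> nat \<Rightarrow> 'k poly" where
  "lagrange_numer t d j = (\<Prod>k\<in>{..<d} - {j}. [:- t k, 1:])"

definition lagrange_denom :: "(nat \<Rightarrow> 'k::comm_ring_1) \<Rightarrow> nat \<Rightarrow> nat \<Rightarrow> 'k" where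
  "lagrange_denom t d j = (\<Prod>k\<in>{..<d} - {j}. t j - t k)"

lemma linear_mult_lagrange_numer: "j < d \<Longrightarrow> [:- t j, 1:] * lagrange_numer t d j = node_poly t d"
  unfolding node_poly_def lagrange_numer_def by (simp add: prod.remove[of "{..<d}" j])

lemma poly_lagrange_numer: "poly (lagrange_numer t d j) x = (\<Prod>k\<in>{..<d} - {j}. x - t k)"
  by (simp add: lagrange_numer_def poly_prod)

lemma node_poly_dvd_lagrange_numer_mult:
  assumes "j < d" "m < d" "j \<noteq> m"
  shows "node_poly t d dvd lagrange_numer t d j * lagrange_numer t d m"
proof -
  have "lagrange_numer t d m = [:- t j, 1:] * (\<Prod>k\<in>{..<d} - {m} - {j}. [:- t k, 1:])"
    unfolding lagrange_numer_def using assms by (subst prod.remove[of _ j]) auto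
  then have "lagrange_numer t d j * lagrange_numer t d m
      = node_poly t d * (\<Prod>k\<in>{..<d} - {m} - {j}. [:- t k, 1:])"
    unfolding linear_mult_lagrange_numer[OF assms(1), symmetric] by (simp only: ac_simps)
  then show ?thesis
    by (metis dvd_triv_left)
qed

lemma node_poly_dvd_lagrange_numer_square:
  assumes "m < d"
  shows "node_poly t d dvd lagrange_numer t d m * lagrange_numer t d m
           - smult (lagrange_denom t d m) (lagrange_numer t d m)"
proof -
  have "poly (lagrange_numer t d m - [:lagrange_denom t d m:]) (t m) = 0"
    by (simp add: poly_lagrange_numer lagrange_denom_def)
  then obtain r where r: "lagrange_numer t d m - [:lagrange_denom t d m:] = [:- t m, 1:] * r"
    by (auto simp only: poly_eq_0_iff_dvd elim!: dvdE)
  have "lagrange_numer t d m * lagrange_numer t d m - smult (lagrange_denom t d m) (lagrange_numer t d m)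
      = lagrange_numer t d m * (lagrange_numer t d m - [:lagrange_denom t d m:])"
    by (simp add: right_diff_distrib mult.commute[of _ "[:_:]"])
  also have "\<dots> = node_poly t d * r"
    unfolding r linear_mult_lagrange_numer[OF assms, symmetric] by (simp only: ac_simps)
  finally show ?thesis
    by (metis dvd_triv_left)
qed

lemma lagrange_denom_nonzero:
  "inj_on t {..<d} \<Longrightarrow> m < d \<Longrightarrow> lagrange_denom t d m \<noteq> (0 :: 'k::idom)"
  by (auto simp: lagrange_denom_def inj_on_def)

lemma sum_lagrange_basis:
  fixes t :: "nat \<Rightarrow> 'k::field"
  assumes inj: "inj_on t {..<d}" and "0 < d"
  shows "(\<Sum>m<d. smult (inverse (lagrange_denom t d m)) (lagrange_numer t d m)) = 1"
proof (rule poly_eqI_degree[where A = "t ` {..<d}"])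
  fix x assume "x \<in> t ` {..<d}"
  then obtain j where j: "j < d" and x: "x = t j" by auto
  have "poly (lagrange_numer t d m) (t j) = (if m = j then lagrange_denom t d m else 0)" if "m < d" for m
    using j that by (auto simp: poly_lagrange_numer lagrange_denom_def intro: prod_zero)
  moreover have "lagrange_denom t d j \<noteq> 0"
    using inj j by (rule lagrange_denom_nonzero)
  ultimately have "(\<Sum>m<d. inverse (lagrange_denom t d m) * poly (lagrange_numer t d m) (t j))
      = (\<Sum>m<d. if m = j then 1 else 0)"
    by (intro sum.cong) auto
  with j show "poly (\<Sum>m<d. smult (inverse (lagrange_denom t d m)) (lagrange_numer t d m)) x = poly 1 x"
    by (simp add: poly_sum x)
next
  have card: "card (t ` {..<d}) = d"
    using inj by (simp add: card_image)
  have "degree (lagrange_numer t d m) \<le> d - 1" if "m < d" for m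
  proof -
    have "degree (lagrange_numer t d m) \<le> (\<Sum>k\<in>{..<d} - {m}. degree [:- t k, 1:])"
      unfolding lagrange_numer_def
      using degree_prod_sum_le[of "{..<d} - {m}" "\<lambda>k. [:- t k, 1:]"] by (simp add: o_def)
    also have "\<dots> = d - 1"
      using that by simp
    finally show ?thesis .
  qed
  then have "degree (\<Sum>m<d. smult (inverse (lagrange_denom t d m)) (lagrange_numer t d m)) \<le> d - 1"
    by (intro degree_sum_le) (auto intro: order.trans[OF degree_smult_le])
  with card \<open>0 < d\<close>
  show "degree (\<Sum>m<d. smult (inverse (lagrange_denom t d m)) (lagrange_numer t d m)) < card (t ` {..<d})"
    by linarith
  show "degree (1 :: 'k poly) < card (t ` {..<d})"
    using card \<open>0 < d\<close> by simp
qed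


section \<open>Complete systems of orthogonal idempotents\<close>

definition complete_orthogonal_idempotents :: "nat \<Rightarrow> nat \<Rightarrow> (nat \<Rightarrow> 'k::semiring_1 mat) \<Rightarrow> bool" where
  "complete_orthogonal_idempotents n d E \<longleftrightarrow>
     (\<forall>i<d. \<forall>j<d. E i * E j = (if i = j then E i else 0\<^sub>m n n)) \<and> mat_sum n {..<d} E = 1\<^sub>m n"

lemma complete_orthogonal_idempotents_cong:
  "(\<And>c. c < d \<Longrightarrow> E c = E' c) \<Longrightarrow>
     complete_orthogonal_idempotents n d E \<longleftrightarrow> complete_orthogonal_idempotents n d E'"
proof -
  assume eq: "\<And>c. c < d \<Longrightarrow> E c = E' c"
  then have "mat_sum n {..<d} E = mat_sum n {..<d} E'"
    by (intro mat_sum_cong) simp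
  with eq show ?thesis
    by (simp add: complete_orthogonal_idempotents_def)
qed

lemma lagrange_basis_idempotents:
  fixes t :: "nat \<Rightarrow> 'k::field"
  assumes A: "A \<in> carrier_mat n n" and annih: "poly_mat n A (node_poly t d) = 0\<^sub>m n n"
    and inj: "inj_on t {..<d}" and "0 < d"
  shows "complete_orthogonal_idempotents n d
           (\<lambda>m. inverse (lagrange_denom t d m) \<cdot>\<^sub>m poly_mat n A (lagrange_numer t d m))"
proof -
  define Q where "Q m = poly_mat n A (lagrange_numer t d m)" for m
  define \<gamma> where "\<gamma> m = lagrange_denom t d m" for m
  have Q: "Q m \<in> carrier_mat n n" for m
    using A by (simp add: Q_def)
  have QQ: "Q j * Q m = (if j = m then \<gamma> m \<cdot>\<^sub>m Q m else 0\<^sub>m n n)" if "j < d" "m < d" for j m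
  proof (cases "j = m")
    case True
    have "poly_mat n A (lagrange_numer t d m * lagrange_numer t d m)
        = poly_mat n A (smult (\<gamma> m) (lagrange_numer t d m))"
      using node_poly_dvd_lagrange_numer_square[OF \<open>m < d\<close>] annih unfolding \<gamma>_def
      by (rule poly_mat_eq_if_dvd_diff[OF A])
    with True A show ?thesis
      by (simp add: Q_def poly_mat_mult poly_mat_smult)
  next
    case False
    have "poly_mat n A (lagrange_numer t d j * lagrange_numer t d m) = poly_mat n A 0"
      using node_poly_dvd_lagrange_numer_mult[OF that False] annih
      by (intro poly_mat_eq_if_dvd_diff[OF A]) simp_all
    with False A show ?thesis
      by (simp add: Q_def poly_mat_mult)
  qed
  have \<gamma>: "\<gamma> m \<noteq> 0" if "m < d" for m
    using lagrange_denom_nonzero[OF inj that] by (simp add: \<gamma>_def)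
  have "inverse (\<gamma> i) \<cdot>\<^sub>m Q i * (inverse (\<gamma> j) \<cdot>\<^sub>m Q j)
      = (if i = j then inverse (\<gamma> i) \<cdot>\<^sub>m Q i else 0\<^sub>m n n)" if "i < d" "j < d" for i j
    using QQ[OF that] \<gamma>[OF that(1)] Q[of i] Q[of j]
    by (auto simp: mult_smult_assoc_mat[of _ n n] mult_smult_distrib[of _ n n] intro!: eq_matI)
  moreover have "mat_sum n {..<d} (\<lambda>m. inverse (\<gamma> m) \<cdot>\<^sub>m Q m) = 1\<^sub>m n"
    using poly_mat_sum[OF A, of "{..<d}" "\<lambda>m. smult (inverse (\<gamma> m)) (lagrange_numer t d m)"]
      sum_lagrange_basis[OF inj \<open>0 < d\<close>] A
    by (simp add: Q_def \<gamma>_def poly_mat_smult)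
  ultimately show ?thesis
    unfolding complete_orthogonal_idempotents_def Q_def \<gamma>_def by blast
qed


lemma complete_orthogonal_idempotents_if_mult:
  assumes E: "complete_orthogonal_idempotents n d E" "\<And>i. E i \<in> carrier_mat n n"
    and \<alpha>: "\<And>i. \<alpha> i \<in> carrier_mat n n"
    and mult: "\<And>i j. i < d \<Longrightarrow> j < d \<Longrightarrow> \<alpha> i * E j = (if i = j then E j else 0\<^sub>m n n)"
  shows "complete_orthogonal_idempotents n d \<alpha>"
proof -
  have E_sum: "mat_sum n {..<d} E = 1\<^sub>m n"
    using E(1) by (simp add: complete_orthogonal_idempotents_def)
  have \<alpha>_eq: "\<alpha> i = E i" if "i < d" for i
  proof -
    have "\<alpha> i = \<alpha> i * mat_sum n {..<d} E"
      using \<alpha>[of i] by (simp add: E_sum)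
    also have "\<dots> = mat_sum n {..<d} (\<lambda>j. if j = i then E i else 0\<^sub>m n n)"
      using E(2) \<alpha> mult[OF that] by (auto simp: mat_sum_mult_left intro!: mat_sum_cong)
    also have "\<dots> = E i"
      using that E(2) by (simp add: mat_sum_delta)
    finally show ?thesis .
  qed
  have "\<alpha> i * \<alpha> j = (if i = j then \<alpha> i else 0\<^sub>m n n)" if "i < d" "j < d" for i j
    using mult[OF that] \<alpha>_eq[OF that(1)] \<alpha>_eq[OF that(2)] by auto
  moreover have "mat_sum n {..<d} \<alpha> = mat_sum n {..<d} E"
    by (rule mat_sum_cong) (simp add: \<alpha>_eq)
  ultimately show ?thesis
    using E_sum by (simp add: complete_orthogonal_idempotents_def)
qed

lemma idempotent_mult_eq_zero_if_sum_eq_zero: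
  fixes E :: "nat \<Rightarrow> 'k::field mat"
  assumes sum: "mat_sum n {..<d} (\<lambda>m. \<gamma> m \<cdot>\<^sub>m (X m * E m)) = 0\<^sub>m n n"
    and E: "complete_orthogonal_idempotents n d E" "\<And>m. E m \<in> carrier_mat n n"
    and X: "\<And>m. X m \<in> carrier_mat n n" and \<gamma>: "\<gamma> j \<noteq> 0" and "j < d"
  shows "X j * E j = 0\<^sub>m n n"
proof -
  have "mat_sum n {..<d} (\<lambda>m. \<gamma> m \<cdot>\<^sub>m (X m * E m)) * E j
      = mat_sum n {..<d} (\<lambda>m. \<gamma> m \<cdot>\<^sub>m (X m * E m) * E j)"
    by (rule mat_sum_mult_right) (use E X in \<open>auto intro!: mult_carrier_mat smult_carrier_mat\<close>)
  also have "\<dots> = mat_sum n {..<d} (\<lambda>m. if m = j then \<gamma> j \<cdot>\<^sub>m (X j * E j) else 0\<^sub>m n n)"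
  proof (rule mat_sum_cong)
    fix m assume "m \<in> {..<d}"
    then have "E m * E j = (if m = j then E j else 0\<^sub>m n n)"
      using E(1) \<open>j < d\<close> by (simp add: complete_orthogonal_idempotents_def)
    moreover have "\<gamma> m \<cdot>\<^sub>m (X m * E m) * E j = \<gamma> m \<cdot>\<^sub>m (X m * (E m * E j))"
      using X[of m] E(2)
      by (simp add: mult_smult_assoc_mat[OF mult_carrier_mat[OF X E(2)] E(2)] assoc_mult_mat[OF X E(2) E(2)])
    ultimately show "\<gamma> m \<cdot>\<^sub>m (X m * E m) * E j = (if m = j then \<gamma> j \<cdot>\<^sub>m (X j * E j) else 0\<^sub>m n n)"
      using X[of m] by (simp add: right_mult_zero_mat)
  qed
  also have "\<dots> = \<gamma> j \<cdot>\<^sub>m (X j * E j)"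
    using \<open>j < d\<close> X[of j] E(2)[of j] by (intro mat_sum_delta) auto
  finally have "\<gamma> j \<cdot>\<^sub>m (X j * E j) = 0\<^sub>m n n"
    using sum by (simp add: left_mult_zero_mat[OF E(2)])
  then show ?thesis
    using \<gamma> mult_carrier_mat[OF X E(2)] by (rule smult_mat_eq_zero_imp)
qed

section \<open>Sums and products over permutations\<close>

lemma card_permutes_with_value:
  assumes "finite S" "a \<in> S" "b \<in> S"
  shows "card {\<sigma>. \<sigma> permutes S \<and> \<sigma> a = b} = fact (card S - 1)"
proof -
  have "bij_betw ((\<circ>) (transpose a b)) {\<tau>. \<tau> permutes S - {a}} {\<sigma>. \<sigma> permutes S \<and> \<sigma> a = b}"
  proof (rule bij_betw_byWitness[where f' = "(\<circ>) (transpose a b)"])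
    have "transpose a b \<circ> \<tau> permutes S" "(transpose a b \<circ> \<tau>) a = b" if "\<tau> permutes S - {a}" for \<tau>
      using assms that permutes_not_in[OF that, of a]
      by (auto intro!: permutes_compose permutes_swap_id dest: permutes_subset[of _ _ S])
    then show "(\<circ>) (transpose a b) ` {\<tau>. \<tau> permutes S - {a}} \<subseteq> {\<sigma>. \<sigma> permutes S \<and> \<sigma> a = b}"
      by blast
    have "transpose a (\<sigma> a) \<circ> \<sigma> permutes S - {a}" if "\<sigma> permutes S" for \<sigma>
      using assms that by (intro permutes_insert_lemma) (simp add: insert_absorb)
    then show "(\<circ>) (transpose a b) ` {\<sigma>. \<sigma> permutes S \<and> \<sigma> a = b} \<subseteq> {\<tau>. \<tau> permutes S - {a}}"
      by blast
  qed (simp_all add: comp_assoc[symmetric])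
  then show ?thesis
    using assms by (simp add: bij_betw_same_card[symmetric] card_permutations)
qed

lemma sum_permutes_app:
  fixes f :: "'a \<Rightarrow> 'k::semiring_1"
  assumes "finite S" "a \<in> S"
  shows "(\<Sum>\<sigma> | \<sigma> permutes S. f (\<sigma> a)) = of_nat (fact (card S - 1)) * (\<Sum>b\<in>S. f b)"
proof -
  have "(\<Sum>\<sigma> | \<sigma> permutes S. f (\<sigma> a)) = (\<Sum>b\<in>S. \<Sum>\<sigma> | \<sigma> \<in> {\<sigma>. \<sigma> permutes S} \<and> \<sigma> a = b. f (\<sigma> a))"
    using assms by (intro sum.group[symmetric]) (auto simp: finite_permutations permutes_in_image)
  also have "\<dots> = (\<Sum>b\<in>S. of_nat (fact (card S - 1)) * f b)"
    using assms by (intro sum.cong) (simp_all add: card_permutes_with_value)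
  finally show ?thesis
    by (simp add: sum_distrib_left)
qed

lemma mat_sum_permutes_app:
  fixes F :: "'a \<Rightarrow> 'k::semiring_1 mat"
  assumes "finite S" "a \<in> S" "\<And>b. b \<in> S \<Longrightarrow> F b \<in> carrier_mat n n"
  shows "mat_sum n {\<sigma>. \<sigma> permutes S} (\<lambda>\<sigma>. F (\<sigma> a)) = of_nat (fact (card S - 1)) \<cdot>\<^sub>m mat_sum n S F"
proof (rule eq_matI)
  fix i j assume "i < dim_row (of_nat (fact (card S - 1)) \<cdot>\<^sub>m mat_sum n S F)"
    "j < dim_col (of_nat (fact (card S - 1)) \<cdot>\<^sub>m mat_sum n S F)"
  with assms sum_permutes_app[OF assms(1,2), of "\<lambda>b. F b $$ (i, j)"]
  show "mat_sum n {\<sigma>. \<sigma> permutes S} (\<lambda>\<sigma>. F (\<sigma> a)) $$ (i, j)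
      = (of_nat (fact (card S - 1)) \<cdot>\<^sub>m mat_sum n S F) $$ (i, j)"
    by simp
qed auto

lemma prod_list_map_upt_inj:
  "inj_on \<sigma> {a..<b} \<Longrightarrow> prod_list (map (\<lambda>k. f (\<sigma> k)) [a..<b]) = (\<Prod>k\<in>\<sigma> ` {a..<b}. (f k :: 'k::comm_monoid_mult))"
  by (simp add: prod.reindex prod.distinct_set_conv_list[symmetric])

section \<open>Products of linear tensors\<close>

definition linear_ft :: "nat \<Rightarrow> (nat \<Rightarrow> 'k::field mat) \<Rightarrow> 'k ftensor" where
  "linear_ft n B w = (case w of [c] \<Rightarrow> B c | _ \<Rightarrow> 0\<^sub>m n n)"

definition word_prod :: "nat \<Rightarrow> (nat \<Rightarrow> 'k::field mat) list \<Rightarrow> nat list \<Rightarrow> 'k mat" where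
  "word_prod n Bs w = mat_prod_list n (map2 (\<lambda>B c. B c) Bs w)"

lemma word_prod_Nil [simp]: "word_prod n [] w = 1\<^sub>m n"
  and word_prod_Cons [simp]: "word_prod n (B # Bs) (c # w) = B c * word_prod n Bs w"
  by (simp_all add: word_prod_def)

lemma word_prod_carrier:
  "(\<And>B c. B \<in> set Bs \<Longrightarrow> B c \<in> carrier_mat n n) \<Longrightarrow> word_prod n Bs w \<in> carrier_mat n n"
  unfolding word_prod_def by (rule mat_prod_list_carrier) (auto simp: set_zip)

lemma linear_ft_eq: "linear_ft n B w = (if length w = 1 then B (hd w) else 0\<^sub>m n n)"
  by (cases w rule: remdups_adj.cases) (auto simp: linear_ft_def)

lemma ft_mult_linear_ft:
  assumes B: "\<And>c. B c \<in> carrier_mat n n" and G: "\<And>w. G w \<in> carrier_mat n n"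
  shows "ft_mult n (linear_ft n B) G w = (case w of [] \<Rightarrow> 0\<^sub>m n n | c # w' \<Rightarrow> B c * G w')"
proof (cases w)
  case Nil
  then show ?thesis
    by (auto simp: ft_mult_def linear_ft_def intro!: eq_matI)
next
  case (Cons c w')
  have "ft_mult n (linear_ft n B) G w = B c * G w'"
  proof (rule eq_matI)
    fix i j assume "i < dim_row (B c * G w')" "j < dim_col (B c * G w')"
    then have i: "i < n" and j: "j < n"
      using B[of c] G[of w'] by auto
    have "ft_mult n (linear_ft n B) G w $$ (i, j)
        = (\<Sum>a\<in>{0..length w}. \<Sum>l<n. linear_ft n B (take a w) $$ (i, l) * G (drop a w) $$ (l, j))"
      using i j by (simp add: ft_mult_def)
    also have "\<dots> = (\<Sum>a\<in>{0..length w}. if a = 1 then (B c * G w') $$ (i, j) else 0)"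
    proof (rule sum.cong)
      fix a assume a: "a \<in> {0..length w}"
      show "(\<Sum>l<n. linear_ft n B (take a w) $$ (i, l) * G (drop a w) $$ (l, j))
          = (if a = 1 then (B c * G w') $$ (i, j) else 0)"
      proof (cases "a = 1")
        case True
        then show ?thesis
          using Cons index_mult_mat_sum[OF B G i j] by (simp add: linear_ft_def)
      next
        case False
        then have "linear_ft n B (take a w) = 0\<^sub>m n n"
          using a by (simp add: linear_ft_eq)
        with False i show ?thesis
          by simp
      qed
    qed simp
    also have "\<dots> = (B c * G w') $$ (i, j)"
      using Cons by (simp add: Suc_le_eq)
    finally show "ft_mult n (linear_ft n B) G w $$ (i, j) = (B c * G w') $$ (i, j)" .
  qed (use B[of c] G[of w'] in \<open>auto simp: ft_mult_def\<close>)
  with Cons show ?thesis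
    by simp
qed

lemma ft_prod_linear_ft:
  assumes "\<And>B c. B \<in> set Bs \<Longrightarrow> B c \<in> carrier_mat n n"
  shows "ft_prod n (map (linear_ft n) Bs) w = (if length w = length Bs then word_prod n Bs w else 0\<^sub>m n n)"
  using assms
proof (induction Bs arbitrary: w)
  case Nil
  then show ?case
    by (simp add: ft_prod_def ft_one_def)
next
  case (Cons B Bs)
  have "ft_prod n (map (linear_ft n) (B # Bs)) w = ft_mult n (linear_ft n B) (ft_prod n (map (linear_ft n) Bs)) w"
    by (simp add: ft_prod_def)
  also have "\<dots> = (case w of [] \<Rightarrow> 0\<^sub>m n n | c # w' \<Rightarrow> B c * ft_prod n (map (linear_ft n) Bs) w')"
    using Cons by (intro ft_mult_linear_ft) (auto intro: word_prod_carrier)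
  finally show ?case
    using Cons by (auto split: list.split simp: right_mult_zero_mat)
qed

section \<open>Substituting scalars for the letters\<close>

fun eval_words :: "nat \<Rightarrow> (nat \<Rightarrow> 'k::comm_semiring_1) \<Rightarrow> nat \<Rightarrow> nat \<Rightarrow> (nat list \<Rightarrow> 'k mat) \<Rightarrow> 'k mat" where
  "eval_words n t d 0 G = G []"
| "eval_words n t d (Suc m) G = mat_sum n {..<d} (\<lambda>c. t c \<cdot>\<^sub>m eval_words n t d m (\<lambda>w. G (c # w)))"

lemma eval_words_carrier: "(\<And>w. G w \<in> carrier_mat n n) \<Longrightarrow> eval_words n t d m G \<in> carrier_mat n n"
  by (cases m) auto

lemma eval_words_zero:
  "(\<And>w. length w = m \<Longrightarrow> G w = 0\<^sub>m n n) \<Longrightarrow> eval_words n t d m G = 0\<^sub>m n n"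
  by (induction m arbitrary: G) (auto intro!: mat_sum_zero)

lemma eval_words_mat_sum:
  assumes "finite S" "\<And>s w. F s w \<in> carrier_mat n n"
  shows "eval_words n t d m (\<lambda>w. mat_sum n S (\<lambda>s. F s w)) = mat_sum n S (\<lambda>s. eval_words n t d m (F s))"
  using assms(2)
proof (induction m arbitrary: F)
  case (Suc m)
  have "eval_words n t d (Suc m) (\<lambda>w. mat_sum n S (\<lambda>s. F s w))
      = mat_sum n {..<d} (\<lambda>c. mat_sum n S (\<lambda>s. t c \<cdot>\<^sub>m eval_words n t d m (\<lambda>w. F s (c # w))))"
    using Suc by (auto simp: smult_mat_sum eval_words_carrier intro!: mat_sum_cong)
  then show ?case
    by (simp add: mat_sum_swap[of n "{..<d}"])
qed simp

lemma eval_words_mult_left: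
  assumes "M \<in> carrier_mat n n" "\<And>w. G w \<in> carrier_mat n n"
  shows "eval_words n t d m (\<lambda>w. M * G w) = M * eval_words n t d m G"
  using assms(2)
proof (induction m arbitrary: G)
  case (Suc m)
  have E: "eval_words n t d m (\<lambda>w. G (c # w)) \<in> carrier_mat n n" for c
    using Suc.prems by (rule eval_words_carrier)
  show ?case
    using Suc assms(1) E
    by (auto simp: mat_sum_mult_left mult_smult_distrib[OF assms(1) E] intro!: mat_sum_cong)
qed simp

lemma eval_words_word_prod:
  assumes "\<And>B c. B \<in> set Bs \<Longrightarrow> B c \<in> carrier_mat n n"
  shows "eval_words n t d (length Bs) (word_prod n Bs)
           = mat_prod_list n (map (\<lambda>B. mat_sum n {..<d} (\<lambda>c. t c \<cdot>\<^sub>m B c)) Bs)"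
  using assms
proof (induction Bs)
  case (Cons B Bs)
  define R where "R = mat_prod_list n (map (\<lambda>B. mat_sum n {..<d} (\<lambda>c. t c \<cdot>\<^sub>m B c)) Bs)"
  have R: "R \<in> carrier_mat n n" and B: "\<And>c. B c \<in> carrier_mat n n"
    using Cons.prems by (auto simp: R_def intro!: mat_prod_list_carrier)
  have "eval_words n t d (length (B # Bs)) (word_prod n (B # Bs))
      = mat_sum n {..<d} (\<lambda>c. t c \<cdot>\<^sub>m (B c * R))"
    using Cons by (auto simp: R_def eval_words_mult_left word_prod_carrier intro!: mat_sum_cong)
  also have "\<dots> = mat_sum n {..<d} (\<lambda>c. t c \<cdot>\<^sub>m B c) * R"
    using B R by (auto simp: mat_sum_mult_right mult_smult_assoc_mat[of _ n n] intro!: mat_sum_cong)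
  finally show ?case
    by (simp add: R_def)
qed simp


section \<open>The coefficients of \<open>\<chi>\<^sub>d(T)\<close>\<close>

definition minus_gen_coeffs :: "nat \<Rightarrow> (nat \<Rightarrow> 'k::field mat) \<Rightarrow> nat \<Rightarrow> nat \<Rightarrow> 'k mat" where
  "minus_gen_coeffs n \<alpha> s c = \<alpha> c - (if c = s then 1\<^sub>m n else 0\<^sub>m n n)"

definition chi_coeff :: "nat \<Rightarrow> nat \<Rightarrow> (nat \<Rightarrow> 'k::field mat) \<Rightarrow> nat list \<Rightarrow> 'k mat" where
  "chi_coeff n d \<alpha> w = mat_sum n {\<sigma>. \<sigma> permutes {..<d}}
     (\<lambda>\<sigma>. word_prod n (map (\<lambda>k. minus_gen_coeffs n \<alpha> (\<sigma> k)) [0..<d]) w)"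

lemma minus_gen_coeffs_carrier: "\<alpha> c \<in> carrier_mat n n \<Longrightarrow> minus_gen_coeffs n \<alpha> s c \<in> carrier_mat n n"
  unfolding minus_gen_coeffs_def by (rule minus_carrier_mat) simp

lemma ft_sub_linear_ft_gen:
  assumes "\<And>c. \<alpha> c \<in> carrier_mat n n"
  shows "ft_sub n (linear_ft n \<alpha>) (ft_gen n s) = linear_ft n (minus_gen_coeffs n \<alpha> s)"
proof
  fix w
  show "ft_sub n (linear_ft n \<alpha>) (ft_gen n s) w = linear_ft n (minus_gen_coeffs n \<alpha> s) w"
    using assms
    by (cases w rule: remdups_adj.cases)
      (auto simp: ft_sub_def ft_gen_def linear_ft_def minus_gen_coeffs_def intro!: eq_matI)
qed

lemma chi_d_linear_ft:
  assumes "\<And>c. \<alpha> c \<in> carrier_mat n n"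
  shows "chi_d n d (linear_ft n \<alpha>) w = (if length w = d then chi_coeff n d \<alpha> w else 0\<^sub>m n n)"
proof -
  have "ft_prod n (map (\<lambda>k. ft_sub n (linear_ft n \<alpha>) (ft_gen n (\<sigma> k))) [0..<d]) w
      = ft_prod n (map (linear_ft n) (map (\<lambda>k. minus_gen_coeffs n \<alpha> (\<sigma> k)) [0..<d])) w" for \<sigma>
    by (simp add: ft_sub_linear_ft_gen[OF assms] o_def)
  also have "\<dots> \<sigma> = (if length w = d then word_prod n (map (\<lambda>k. minus_gen_coeffs n \<alpha> (\<sigma> k)) [0..<d]) w
      else 0\<^sub>m n n)" for \<sigma>
    by (rule trans[OF ft_prod_linear_ft]) (auto simp: minus_gen_coeffs_carrier assms)
  finally show ?thesis
    by (auto simp: chi_d_def ft_sum_def chi_coeff_def mat_sum_def intro!: eq_matI)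
qed

lemma chi_d_linear_ft_eq_zero_iff:
  assumes "\<And>c. \<alpha> c \<in> carrier_mat n n"
  shows "chi_d n d (linear_ft n \<alpha>) = ft_zero n \<longleftrightarrow> (\<forall>w. length w = d \<longrightarrow> chi_coeff n d \<alpha> w = 0\<^sub>m n n)"
  by (auto simp: fun_eq_iff ft_zero_def chi_d_linear_ft[OF assms])


lemma word_prod_upt:
  "length w = d \<Longrightarrow> word_prod n (map B [0..<d]) w = mat_prod_list n (map (\<lambda>k. B k (w ! k)) [0..<d])"
  unfolding word_prod_def by (intro arg_cong[where f = "mat_prod_list n"] nth_equalityI) auto

lemma chi_coeff_eq_zero:
  assumes idem: "complete_orthogonal_idempotents n d \<alpha>"
    and \<alpha>: "\<And>c. \<alpha> c \<in> carrier_mat n n" and \<alpha>_0: "\<And>c. d \<le> c \<Longrightarrow> \<alpha> c = 0\<^sub>m n n"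
    and w: "length w = d"
  shows "chi_coeff n d \<alpha> w = 0\<^sub>m n n"
  unfolding chi_coeff_def
proof (rule mat_sum_zero)
  fix \<sigma> assume "\<sigma> \<in> {\<sigma>. \<sigma> permutes {..<d}}"
  then have \<sigma>: "\<sigma> permutes {..<d}" by simp
  define P where "P = word_prod n (map (\<lambda>k. minus_gen_coeffs n \<alpha> (\<sigma> k)) [0..<d]) w"
  have P: "P \<in> carrier_mat n n"
    unfolding P_def using \<alpha> by (auto intro!: word_prod_carrier minus_gen_coeffs_carrier)
  have \<alpha>_mult: "\<alpha> c * \<alpha> j = (if c = j then \<alpha> j else 0\<^sub>m n n)" if "j < d" for c j
    using idem that \<alpha>_0[of c] \<alpha>[of j]
    by (cases "c < d") (auto simp: complete_orthogonal_idempotents_def)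
  have "P * \<alpha> j = 0\<^sub>m n n" if j: "j < d" for j
  proof -
    define cs where
      "cs = map (\<lambda>k. (if w ! k = j then 1 else 0) - (if w ! k = \<sigma> k then 1 else 0 :: 'a)) [0..<d]"
    have "P * \<alpha> j = prod_list cs \<cdot>\<^sub>m \<alpha> j"
      unfolding P_def word_prod_upt[OF w]
    proof (rule mat_prod_list_mult_eigen)
      fix k assume "k < length (map (\<lambda>k. minus_gen_coeffs n \<alpha> (\<sigma> k) (w ! k)) [0..<d])"
      then have k: "k < d" by simp
      have "minus_gen_coeffs n \<alpha> (\<sigma> k) (w ! k) * \<alpha> j
          = \<alpha> (w ! k) * \<alpha> j - (if w ! k = \<sigma> k then 1\<^sub>m n else 0\<^sub>m n n) * \<alpha> j"
        unfolding minus_gen_coeffs_def using \<alpha> by (intro minus_mult_distrib_mat[of _ n n]) auto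
      with j k \<alpha>[of j] show "map (\<lambda>k. minus_gen_coeffs n \<alpha> (\<sigma> k) (w ! k)) [0..<d] ! k * \<alpha> j = cs ! k \<cdot>\<^sub>m \<alpha> j"
        by (auto simp: cs_def \<alpha>_mult intro!: eq_matI)
    qed (auto simp: cs_def \<alpha> minus_gen_coeffs_carrier)
    moreover have "0 \<in> set cs"
    proof -
      obtain k where "k < d" "\<sigma> k = j"
        using j permutes_image[OF \<sigma>] by (metis imageE lessThan_iff)
      then show ?thesis
        unfolding cs_def by (force simp: image_iff)
    qed
    ultimately show ?thesis
      using \<alpha>[of j] by (auto simp: prod_list_zero_iff intro!: eq_matI)
  qed
  then have "P * mat_sum n {..<d} \<alpha> = 0\<^sub>m n n"
    using P \<alpha> by (auto simp: mat_sum_mult_left intro!: mat_sum_zero)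
  then show "P = 0\<^sub>m n n"
    using idem P by (simp add: complete_orthogonal_idempotents_def)
qed


lemma mat_sum_smult_minus_gen_coeffs:
  fixes \<alpha> :: "nat \<Rightarrow> 'k::field mat"
  assumes \<alpha>: "\<And>c. \<alpha> c \<in> carrier_mat n n" and "s < d"
  shows "mat_sum n {..<d} (\<lambda>c. t c \<cdot>\<^sub>m minus_gen_coeffs n \<alpha> s c)
           = poly_mat n (mat_sum n {..<d} (\<lambda>c. t c \<cdot>\<^sub>m \<alpha> c)) [:- t s, 1:]"
proof (rule eq_matI)
  fix i j assume "i < dim_row (poly_mat n (mat_sum n {..<d} (\<lambda>c. t c \<cdot>\<^sub>m \<alpha> c)) [:- t s, 1:])"
    "j < dim_col (poly_mat n (mat_sum n {..<d} (\<lambda>c. t c \<cdot>\<^sub>m \<alpha> c)) [:- t s, 1:])"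
  then have i: "i < n" and j: "j < n" by auto
  have "mat_sum n {..<d} (\<lambda>c. t c \<cdot>\<^sub>m minus_gen_coeffs n \<alpha> s c) $$ (i, j)
      = (\<Sum>c<d. t c * \<alpha> c $$ (i, j) - (if c = s then t c * (if i = j then 1 else 0) else 0))"
    using i j \<alpha> by (intro trans[OF index_mat_sum] sum.cong) (auto simp: minus_gen_coeffs_def algebra_simps)
  also have "\<dots> = (\<Sum>c<d. t c * \<alpha> c $$ (i, j)) - t s * (if i = j then 1 else 0)"
    using \<open>s < d\<close> by (simp add: sum_subtractf)
  finally show "mat_sum n {..<d} (\<lambda>c. t c \<cdot>\<^sub>m minus_gen_coeffs n \<alpha> s c) $$ (i, j)
      = poly_mat n (mat_sum n {..<d} (\<lambda>c. t c \<cdot>\<^sub>m \<alpha> c)) [:- t s, 1:] $$ (i, j)"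
    using i j by (simp add: poly_mat_linear carrier_matD[OF \<alpha>])
qed auto

lemma eval_words_chi_coeff:
  fixes \<alpha> :: "nat \<Rightarrow> 'k::field mat"
  assumes \<alpha>: "\<And>c. \<alpha> c \<in> carrier_mat n n"
  shows "eval_words n t d d (chi_coeff n d \<alpha>)
           = of_nat (fact d) \<cdot>\<^sub>m poly_mat n (mat_sum n {..<d} (\<lambda>c. t c \<cdot>\<^sub>m \<alpha> c)) (node_poly t d)"
proof -
  define A where "A = mat_sum n {..<d} (\<lambda>c. t c \<cdot>\<^sub>m \<alpha> c)"
  have A: "A \<in> carrier_mat n n"
    by (simp add: A_def)
  have "eval_words n t d d (word_prod n (map (\<lambda>k. minus_gen_coeffs n \<alpha> (\<sigma> k)) [0..<d]))
      = poly_mat n A (node_poly t d)" if \<sigma>: "\<sigma> permutes {..<d}" for \<sigma>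
  proof -
    have "eval_words n t d d (word_prod n (map (\<lambda>k. minus_gen_coeffs n \<alpha> (\<sigma> k)) [0..<d]))
        = mat_prod_list n (map (\<lambda>k. mat_sum n {..<d} (\<lambda>c. t c \<cdot>\<^sub>m minus_gen_coeffs n \<alpha> (\<sigma> k) c)) [0..<d])"
      using eval_words_word_prod[of "map (\<lambda>k. minus_gen_coeffs n \<alpha> (\<sigma> k)) [0..<d]" n t d]
        minus_gen_coeffs_carrier[OF \<alpha>]
      by (force simp: o_def)
    also have "\<dots> = mat_prod_list n (map (\<lambda>k. poly_mat n A [:- t (\<sigma> k), 1:]) [0..<d])"
      using permutes_in_image[OF \<sigma>]
      by (intro arg_cong[where f = "mat_prod_list n"] map_cong)
        (simp_all add: mat_sum_smult_minus_gen_coeffs[OF \<alpha>] A_def)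
    also have "\<dots> = poly_mat n A (prod_list (map (\<lambda>k. [:- t (\<sigma> k), 1:]) [0..<d]))"
      by (simp add: poly_mat_prod_list[OF A] o_def)
    also have "prod_list (map (\<lambda>k. [:- t (\<sigma> k), 1:]) [0..<d]) = node_poly t d"
      using prod_list_map_upt_inj[where f = "\<lambda>k. [:- t k, 1:]", OF permutes_inj_on[OF \<sigma>]] permutes_image[OF \<sigma>]
      by (simp add: node_poly_def atLeast0LessThan)
    finally show ?thesis .
  qed
  then have "eval_words n t d d (chi_coeff n d \<alpha>)
      = mat_sum n {\<sigma>. \<sigma> permutes {..<d}} (\<lambda>\<sigma>. poly_mat n A (node_poly t d))"
    unfolding chi_coeff_def using \<alpha>
    by (subst eval_words_mat_sum)
      (auto simp: finite_permutations intro!: mat_sum_cong word_prod_carrier minus_gen_coeffs_carrier)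
  also have "\<dots> = of_nat (fact d) \<cdot>\<^sub>m poly_mat n A (node_poly t d)"
    using A by (simp add: mat_sum_const card_permutations)
  finally show ?thesis
    by (simp add: A_def)
qed

lemma eval_words_chi_coeff_Cons:
  fixes \<alpha> :: "nat \<Rightarrow> 'k::field mat" and t :: "nat \<Rightarrow> 'k"
  assumes \<alpha>: "\<And>c. \<alpha> c \<in> carrier_mat n n" and "i < d"
  defines "A \<equiv> mat_sum n {..<d} (\<lambda>c. t c \<cdot>\<^sub>m \<alpha> c)"
  shows "eval_words n t d (d - 1) (\<lambda>w. chi_coeff n d \<alpha> (i # w))
           = of_nat (fact (d - 1)) \<cdot>\<^sub>m
               mat_sum n {..<d} (\<lambda>m. minus_gen_coeffs n \<alpha> m i * poly_mat n A (lagrange_numer t d m))"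
proof -
  have A: "A \<in> carrier_mat n n"
    by (simp add: A_def)
  define Bs where "Bs \<sigma> = map (\<lambda>k. minus_gen_coeffs n \<alpha> (\<sigma> k)) [1..<d]" for \<sigma> :: "nat \<Rightarrow> nat"
  have Bs: "word_prod n (Bs \<sigma>) w \<in> carrier_mat n n" for \<sigma> w
    using \<alpha> by (auto simp: Bs_def intro!: word_prod_carrier minus_gen_coeffs_carrier)
  have chi_Cons: "chi_coeff n d \<alpha> (i # w)
      = mat_sum n {\<sigma>. \<sigma> permutes {..<d}} (\<lambda>\<sigma>. minus_gen_coeffs n \<alpha> (\<sigma> 0) i * word_prod n (Bs \<sigma>) w)" for w
    using \<open>i < d\<close> by (simp add: chi_coeff_def Bs_def upt_conv_Cons)
  have "eval_words n t d (d - 1) (word_prod n (Bs \<sigma>)) = poly_mat n A (lagrange_numer t d (\<sigma> 0))"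
    if \<sigma>: "\<sigma> permutes {..<d}" for \<sigma>
  proof -
    have "eval_words n t d (d - 1) (word_prod n (Bs \<sigma>))
        = mat_prod_list n (map (\<lambda>k. mat_sum n {..<d} (\<lambda>c. t c \<cdot>\<^sub>m minus_gen_coeffs n \<alpha> (\<sigma> k) c)) [1..<d])"
      using eval_words_word_prod[of "Bs \<sigma>" n t d] minus_gen_coeffs_carrier[OF \<alpha>]
      by (force simp: Bs_def o_def)
    also have "\<dots> = mat_prod_list n (map (\<lambda>k. poly_mat n A [:- t (\<sigma> k), 1:]) [1..<d])"
      using permutes_in_image[OF \<sigma>]
      by (intro arg_cong[where f = "mat_prod_list n"] map_cong)
        (simp_all add: mat_sum_smult_minus_gen_coeffs[OF \<alpha>] A_def)
    also have "\<dots> = poly_mat n A (prod_list (map (\<lambda>k. [:- t (\<sigma> k), 1:]) [1..<d]))"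
      by (simp add: poly_mat_prod_list[OF A] o_def)
    also have "\<sigma> ` {1..<d} = {..<d} - {\<sigma> 0}"
    proof -
      have "{1..<d} = {..<d} - {0}" by auto
      then show ?thesis
        using permutes_image[OF \<sigma>] permutes_inj[OF \<sigma>] by (simp add: image_set_diff)
    qed
    then have "prod_list (map (\<lambda>k. [:- t (\<sigma> k), 1:]) [1..<d]) = lagrange_numer t d (\<sigma> 0)"
      using prod_list_map_upt_inj[where f = "\<lambda>k. [:- t k, 1:]", OF permutes_inj_on[OF \<sigma>]]
      by (simp add: lagrange_numer_def)
    finally show ?thesis .
  qed
  then have "eval_words n t d (d - 1) (\<lambda>w. chi_coeff n d \<alpha> (i # w))
      = mat_sum n {\<sigma>. \<sigma> permutes {..<d}}
          (\<lambda>\<sigma>. minus_gen_coeffs n \<alpha> (\<sigma> 0) i * poly_mat n A (lagrange_numer t d (\<sigma> 0)))"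
    unfolding chi_Cons using \<alpha> Bs
    by (subst eval_words_mat_sum)
      (auto simp: finite_permutations eval_words_mult_left minus_gen_coeffs_carrier
        intro!: mat_sum_cong mult_carrier_mat)
  also have "\<dots> = of_nat (fact (d - 1)) \<cdot>\<^sub>m
      mat_sum n {..<d} (\<lambda>m. minus_gen_coeffs n \<alpha> m i * poly_mat n A (lagrange_numer t d m))"
    using \<open>i < d\<close> A \<alpha>
    by (subst mat_sum_permutes_app) (auto simp: minus_gen_coeffs_carrier intro!: mult_carrier_mat)
  finally show ?thesis .
qed


lemma of_nat_inj_on_lessThan_CHAR:
  "CHAR('k::semiring_1_cancel) = 0 \<or> d \<le> CHAR('k) \<Longrightarrow> inj_on (of_nat :: nat \<Rightarrow> 'k) {..<d}"
  by (auto simp: inj_on_def of_nat_eq_iff_cong_CHAR cong_def)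

lemma of_nat_fact_nonzero_CHAR:
  "CHAR('k::idom) = 0 \<or> m < CHAR('k) \<Longrightarrow> of_nat (fact m) \<noteq> (0 :: 'k)"
  by (auto simp: fact_prod of_nat_eq_0_iff_char_dvd dest: dvd_imp_le)

lemma complete_orthogonal_idempotents_if_chi_coeff_eq_zero:
  fixes \<alpha> :: "nat \<Rightarrow> 'k::field mat"
  assumes char: "CHAR('k) = 0 \<or> d < CHAR('k)" and \<alpha>: "\<And>c. \<alpha> c \<in> carrier_mat n n"
    and chi: "\<And>w. length w = d \<Longrightarrow> chi_coeff n d \<alpha> w = 0\<^sub>m n n"
  shows "complete_orthogonal_idempotents n d \<alpha>"
proof -
  define t where "t = (of_nat :: nat \<Rightarrow> 'k)"
  define A where "A = mat_sum n {..<d} (\<lambda>c. t c \<cdot>\<^sub>m \<alpha> c)"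
  have A: "A \<in> carrier_mat n n"
    by (simp add: A_def)
  have fact_nonzero: "of_nat (fact m) \<noteq> (0 :: 'k)" if "m \<le> d" for m
    using char that by (intro of_nat_fact_nonzero_CHAR) auto
  have "of_nat (fact d) \<cdot>\<^sub>m poly_mat n A (node_poly t d) = 0\<^sub>m n n"
    using eval_words_chi_coeff[OF \<alpha>, of t d] eval_words_zero[of d "chi_coeff n d \<alpha>" n t d] chi
    by (simp add: A_def)
  then have annih: "poly_mat n A (node_poly t d) = 0\<^sub>m n n"
    by (rule smult_mat_eq_zero_imp) (use fact_nonzero[of d] A in auto)
  show ?thesis
  proof (cases "d = 0")
    case True
    then have "1\<^sub>m n = (0\<^sub>m n n :: 'k mat)"
      using annih A by (simp add: node_poly_def)
    with True show ?thesis
      by (simp add: complete_orthogonal_idempotents_def)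
  next
    case False
    define E where "E = (\<lambda>m. inverse (lagrange_denom t d m) \<cdot>\<^sub>m poly_mat n A (lagrange_numer t d m))"
    have inj: "inj_on t {..<d}"
      using char unfolding t_def by (intro of_nat_inj_on_lessThan_CHAR) auto
    have E: "complete_orthogonal_idempotents n d E" "E m \<in> carrier_mat n n" for m
      unfolding E_def using lagrange_basis_idempotents[OF A annih inj] False A by simp_all
    have \<gamma>: "lagrange_denom t d m \<noteq> 0" if "m < d" for m
      by (rule lagrange_denom_nonzero[OF inj that])
    have "\<alpha> i * E j = (if i = j then E j else 0\<^sub>m n n)" if i: "i < d" and j: "j < d" for i j
    proof -
      have "eval_words n t d (d - 1) (\<lambda>w. chi_coeff n d \<alpha> (i # w)) = 0\<^sub>m n n"
        using False by (intro eval_words_zero chi) auto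
      then have "of_nat (fact (d - 1)) \<cdot>\<^sub>m
          mat_sum n {..<d} (\<lambda>m. minus_gen_coeffs n \<alpha> m i * poly_mat n A (lagrange_numer t d m)) = 0\<^sub>m n n"
        using eval_words_chi_coeff_Cons[OF \<alpha> i, of t] by (simp add: A_def)
      then have "mat_sum n {..<d} (\<lambda>m. minus_gen_coeffs n \<alpha> m i * poly_mat n A (lagrange_numer t d m))
          = 0\<^sub>m n n"
        by (rule smult_mat_eq_zero_imp) (use fact_nonzero[of "d - 1"] in auto)
      moreover have "mat_sum n {..<d} (\<lambda>m. minus_gen_coeffs n \<alpha> m i * poly_mat n A (lagrange_numer t d m))
          = mat_sum n {..<d} (\<lambda>m. lagrange_denom t d m \<cdot>\<^sub>m (minus_gen_coeffs n \<alpha> m i * E m))"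
      proof (rule mat_sum_cong)
        fix m assume "m \<in> {..<d}"
        then have "poly_mat n A (lagrange_numer t d m) = lagrange_denom t d m \<cdot>\<^sub>m E m"
          using \<gamma>[of m] A by (auto simp: E_def intro!: eq_matI)
        then show "minus_gen_coeffs n \<alpha> m i * poly_mat n A (lagrange_numer t d m)
            = lagrange_denom t d m \<cdot>\<^sub>m (minus_gen_coeffs n \<alpha> m i * E m)"
          using E(2) \<alpha> by (simp add: mult_smult_distrib[of _ n n _ n] minus_gen_coeffs_carrier)
      qed
      ultimately have "mat_sum n {..<d} (\<lambda>m. lagrange_denom t d m \<cdot>\<^sub>m (minus_gen_coeffs n \<alpha> m i * E m))
          = 0\<^sub>m n n"
        by simp
      then have "minus_gen_coeffs n \<alpha> j i * E j = 0\<^sub>m n n"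
        by (rule idempotent_mult_eq_zero_if_sum_eq_zero[where \<gamma> = "lagrange_denom t d"])
          (simp_all add: E \<gamma> j minus_gen_coeffs_carrier \<alpha>)
      then have "\<alpha> i * E j - (if i = j then 1\<^sub>m n else 0\<^sub>m n n) * E j = 0\<^sub>m n n"
        using \<alpha>[of i] E(2)[of j] by (simp add: minus_gen_coeffs_def minus_mult_distrib_mat[of _ n n _ _ n])
      then have "\<alpha> i * E j = (if i = j then 1\<^sub>m n else 0\<^sub>m n n) * E j"
        by (rule mat_eq_if_minus_eq_zero) (use \<alpha>[of i] E(2)[of j] in \<open>auto intro!: mult_carrier_mat\<close>)
      then show ?thesis
        using E(2)[of j] by simp
    qed
    then show ?thesis
      by (rule complete_orthogonal_idempotents_if_mult[OF E \<alpha>])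
  qed
qed


lemma chi_coeff_eq_zero_iff:
  fixes \<alpha> :: "nat \<Rightarrow> 'k::field mat"
  assumes "CHAR('k) = 0 \<or> d < CHAR('k)" and "\<And>c. \<alpha> c \<in> carrier_mat n n"
    and "\<And>c. d \<le> c \<Longrightarrow> \<alpha> c = 0\<^sub>m n n"
  shows "(\<forall>w. length w = d \<longrightarrow> chi_coeff n d \<alpha> w = 0\<^sub>m n n) \<longleftrightarrow> complete_orthogonal_idempotents n d \<alpha>"
  using assms chi_coeff_eq_zero complete_orthogonal_idempotents_if_chi_coeff_eq_zero by metis

section \<open>Linear maps \<open>k\<^sup>d \<rightarrow> End(k\<^sup>n)\<close>\<close>

context
  fixes \<phi> :: "'k::field vec \<Rightarrow> 'k mat" and d n :: nat
  assumes into: "\<forall>a\<in>carrier_vec d. \<phi> a \<in> carrier_mat n n"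
    and add: "\<forall>a\<in>carrier_vec d. \<forall>b\<in>carrier_vec d. \<phi> (a + b) = \<phi> a + \<phi> b"
    and smult: "\<forall>c. \<forall>a\<in>carrier_vec d. \<phi> (c \<cdot>\<^sub>v a) = c \<cdot>\<^sub>m \<phi> a"
begin

lemma linear_map_zero: "\<phi> (0\<^sub>v d) = 0\<^sub>m n n"
proof -
  have "0\<^sub>v d = (0 :: 'k) \<cdot>\<^sub>v 0\<^sub>v d"
    by (intro eq_vecI) auto
  then have "\<phi> (0\<^sub>v d) = \<phi> (0 \<cdot>\<^sub>v 0\<^sub>v d)"
    by simp
  also have "\<dots> = 0\<^sub>m n n"
    using smult into[rule_format, of "0\<^sub>v d"] by (auto intro!: eq_matI)
  finally show ?thesis .
qed

lemma linear_map_unit_vec_expansion: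
  assumes a: "a \<in> carrier_vec d"
  shows "\<phi> a = mat_sum n {..<d} (\<lambda>c. (a $ c) \<cdot>\<^sub>m \<phi> (unit_vec d c))"
proof -
  define a_up_to where "a_up_to m = vec d (\<lambda>i. if i < m then a $ i else 0)" for m
  have "\<phi> (a_up_to m) = mat_sum n {..<m} (\<lambda>c. (a $ c) \<cdot>\<^sub>m \<phi> (unit_vec d c))" if "m \<le> d" for m
    using that
  proof (induction m)
    case 0
    have "a_up_to 0 = 0\<^sub>v d"
      by (auto simp: a_up_to_def)
    then show ?case
      by (simp add: linear_map_zero)
  next
    case (Suc m)
    then have "a_up_to (Suc m) = a_up_to m + (a $ m) \<cdot>\<^sub>v unit_vec d m"
      by (auto simp: a_up_to_def less_Suc_eq)
    then have "\<phi> (a_up_to (Suc m)) = \<phi> (a_up_to m) + (a $ m) \<cdot>\<^sub>m \<phi> (unit_vec d m)"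
      using add smult by (simp add: a_up_to_def)
    also have "\<dots> = mat_sum n {..<Suc m} (\<lambda>c. (a $ c) \<cdot>\<^sub>m \<phi> (unit_vec d c))"
      using Suc into by (auto simp: lessThan_Suc mat_sum_insert comm_add_mat[of _ n n])
    finally show ?case .
  qed
  moreover have "a_up_to d = a"
    using a by (auto simp: a_up_to_def)
  ultimately show ?thesis
    by auto
qed

lemma alg_hom_kd_iff_idempotents:
  "alg_hom_kd n d \<phi> \<longleftrightarrow> complete_orthogonal_idempotents n d (\<lambda>c. \<phi> (unit_vec d c))"
proof -
  have one: "\<phi> (vec d (\<lambda>_. 1)) = mat_sum n {..<d} (\<lambda>c. \<phi> (unit_vec d c))"
    by (subst linear_map_unit_vec_expansion) (use into in \<open>auto intro!: mat_sum_cong eq_matI\<close>)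
  have unit_mult: "vec d (\<lambda>k. unit_vec d i $ k * unit_vec d j $ k) = (if i = j then unit_vec d i else 0\<^sub>v d :: 'k vec)"
    for i j :: nat
    by (intro eq_vecI) (auto simp: unit_vec_def)
  show ?thesis
  proof
    assume hom: "alg_hom_kd n d \<phi>"
    have "\<phi> (unit_vec d i) * \<phi> (unit_vec d j) = (if i = j then \<phi> (unit_vec d i) else 0\<^sub>m n n)" for i j
    proof -
      have "\<phi> (unit_vec d i) * \<phi> (unit_vec d j) = \<phi> (vec d (\<lambda>k. unit_vec d i $ k * unit_vec d j $ k))"
        using hom by (simp add: alg_hom_kd_def)
      then show ?thesis
        by (simp add: unit_mult linear_map_zero)
    qed
    with hom one show "complete_orthogonal_idempotents n d (\<lambda>c. \<phi> (unit_vec d c))"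
      by (simp add: alg_hom_kd_def complete_orthogonal_idempotents_def)
  next
    assume idem: "complete_orthogonal_idempotents n d (\<lambda>c. \<phi> (unit_vec d c))"
    have "\<phi> (vec d (\<lambda>i. a $ i * b $ i)) = \<phi> a * \<phi> b" if a: "a \<in> carrier_vec d" and b: "b \<in> carrier_vec d" for a b
    proof -
      have "\<phi> a * \<phi> b = mat_sum n {..<d} (\<lambda>e. mat_sum n {..<d}
          (\<lambda>c. ((a $ c) \<cdot>\<^sub>m \<phi> (unit_vec d c)) * ((b $ e) \<cdot>\<^sub>m \<phi> (unit_vec d e))))"
        using into
        by (simp add: linear_map_unit_vec_expansion[OF a] linear_map_unit_vec_expansion[OF b]
            mat_sum_mult_right mat_sum_mult_left cong: mat_sum_cong)
      also have "\<dots> = mat_sum n {..<d} (\<lambda>e. mat_sum n {..<d}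
          (\<lambda>c. if c = e then (a $ e * b $ e) \<cdot>\<^sub>m \<phi> (unit_vec d e) else 0\<^sub>m n n))"
      proof (intro mat_sum_cong)
        fix c e assume "c \<in> {..<d}" "e \<in> {..<d}"
        then have "\<phi> (unit_vec d c) * \<phi> (unit_vec d e) = (if c = e then \<phi> (unit_vec d e) else 0\<^sub>m n n)"
          using idem by (auto simp: complete_orthogonal_idempotents_def)
        moreover have "((a $ c) \<cdot>\<^sub>m \<phi> (unit_vec d c)) * ((b $ e) \<cdot>\<^sub>m \<phi> (unit_vec d e))
            = (b $ e) \<cdot>\<^sub>m ((a $ c) \<cdot>\<^sub>m (\<phi> (unit_vec d c) * \<phi> (unit_vec d e)))"
          using into by (simp add: mult_smult_assoc_mat[of _ n n _ n] mult_smult_distrib[of _ n n _ n])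
        ultimately show "((a $ c) \<cdot>\<^sub>m \<phi> (unit_vec d c)) * ((b $ e) \<cdot>\<^sub>m \<phi> (unit_vec d e))
            = (if c = e then (a $ e * b $ e) \<cdot>\<^sub>m \<phi> (unit_vec d e) else 0\<^sub>m n n)"
          by (auto intro!: eq_matI)
      qed
      also have "\<dots> = mat_sum n {..<d} (\<lambda>e. (a $ e * b $ e) \<cdot>\<^sub>m \<phi> (unit_vec d e))"
        using into by (intro mat_sum_cong mat_sum_delta) auto
      also have "\<dots> = \<phi> (vec d (\<lambda>i. a $ i * b $ i))"
        by (subst linear_map_unit_vec_expansion) (auto intro!: mat_sum_cong)
      finally show ?thesis
        by simp
    qed
    with idem one show "alg_hom_kd n d \<phi>"
      by (simp add: alg_hom_kd_def complete_orthogonal_idempotents_def)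
  qed
qed

end

lemma T_phi_eq_linear_ft: "T_phi n d \<phi> = linear_ft n (\<lambda>c. if c < d then \<phi> (unit_vec d c) else 0\<^sub>m n n)"
  by (auto simp: T_phi_def linear_ft_def fun_eq_iff split: list.split)

theorem theoremB:
  fixes \<phi> :: "'k::field vec \<Rightarrow> 'k mat" and d n :: nat
  assumes char: "CHAR('k) = 0 \<or> d < CHAR('k)"
    and into: "\<forall>a\<in>carrier_vec d. \<phi> a \<in> carrier_mat n n"
    and add: "\<forall>a\<in>carrier_vec d. \<forall>b\<in>carrier_vec d. \<phi> (a + b) = \<phi> a + \<phi> b"
    and smult: "\<forall>c. \<forall>a\<in>carrier_vec d. \<phi> (c \<cdot>\<^sub>v a) = c \<cdot>\<^sub>m \<phi> a"
  shows "alg_hom_kd n d \<phi> \<longleftrightarrow> chi_d n d (T_phi n d \<phi>) = ft_zero n"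
proof -
  define \<alpha> where "\<alpha> c = (if c < d then \<phi> (unit_vec d c) else 0\<^sub>m n n)" for c
  have \<alpha>: "\<alpha> c \<in> carrier_mat n n" for c
    using into by (simp add: \<alpha>_def)
  have \<alpha>_0: "\<alpha> c = 0\<^sub>m n n" if "d \<le> c" for c
    using that by (simp add: \<alpha>_def)
  have "alg_hom_kd n d \<phi> \<longleftrightarrow> complete_orthogonal_idempotents n d \<alpha>"
    unfolding alg_hom_kd_iff_idempotents[OF into add smult]
    by (rule complete_orthogonal_idempotents_cong) (simp add: \<alpha>_def)
  also have "\<dots> \<longleftrightarrow> (\<forall>w. length w = d \<longrightarrow> chi_coeff n d \<alpha> w = 0\<^sub>m n n)"
    by (rule chi_coeff_eq_zero_iff[symmetric]) (use char \<alpha> \<alpha>_0 in auto)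
  also have "\<dots> \<longleftrightarrow> chi_d n d (T_phi n d \<phi>) = ft_zero n"
    using chi_d_linear_ft_eq_zero_iff[OF \<alpha>] by (simp add: T_phi_eq_linear_ft \<alpha>_def[abs_def])
  finally show ?thesis .
qed

end
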